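(* A term $t$ is $\to_w$-normal if and only if $t$ is a weak normal term according to the following grammar: weak answers $a ::= v \mid a[x\backslash i]$ with $x\notin\mathrm{ofv}(a)$ $\mid a[x\backslash a']$ with $x\in \mathrm{fv}(a)\setminus\mathrm{ofv}(a)$; inert terms $i ::= x \mid i\,n \mid i[x\backslash i']$ with $x\notin\mathrm{ofv}(i)$ $\mid i[x\backslash a]$ with $x\in\mathrm{fv}(i)\setminus\mathrm{ofv}(i)$; weak normal terms $n ::= a \mid i$.
   Context: Terms: $t,u,s ::= x \mid \lambda x.t \mid t\,u \mid t[x\backslash u]$, where $t[x\backslash u]$ is an explicit substitution binding $x$ in $t$; terms up to $\alpha$-renaming; $\mathrm{fv}(t[x\backslash u]) = (\mathrm{fv}(t)\setminus\{x\})\cup \mathrm{fv}(u)$. Values: $v ::= \lambda x.t$. Substitution contexts: $S ::= \langle\cdot\rangle \mid S[x\backslash u]$. Weak contexts: $W ::= \langle\cdot\rangle \mid W\,t \mid t\,W \mid t[x\backslash W] \mid W[x\backslash u]$. $W\langle\langle t\rangle\rangle$ denotes plugging where $W$ does not capture free variables of $t$. Root rules: $S\langle \lambda x.t\rangle u \mapsto_m S\langle t[x\backslash u]\rangle$; $W\langle\langle x\rangle\rangle[x\backslash u] \mapsto_{e} W\langle\langle u\rangle\rangle[x\backslash u]$ ($W$ weak context); $t[x\backslash S\langle v\rangle] \mapsto_{gcv} S\langle t\rangle$ if $x\notin\mathrm{fv}(t)$. $\to_w$ is the union of the closures of these three rules under weak contexts. Shallow free variables: $\mathrm{ofv}(x)=\{x\}$,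 $\mathrm{ofv}(\lambda x.t)=\emptyset$, $\mathrm{ofv}(tu)=\mathrm{ofv}(t)\cup\mathrm{ofv}(u)$, $\mathrm{ofv}(t[x\backslash u]) = (\mathrm{ofv}(t)\setminus\{x\})\cup\mathrm{ofv}(u)$. *)

theory Defs
  imports Main
begin

text \<open>Terms up to alpha-renaming, represented with de Bruijn indices.
  ES t u stands for the explicit substitution t[x\u]; it binds index 0 in t
  (and nothing in u).  Lam t binds index 0 in t.\<close>

datatype trm = Var nat | Lam trm | App trm trm | ES trm trm

fun fv :: "trm \<Rightarrow> nat set" where
  "fv (Var n) = {n}"
| "fv (Lam t) = (\<lambda>n. n - 1) ` (fv t - {0})"
| "fv (App t u) = fv t \<union> fv u"
| "fv (ES t u) = (\<lambda>n. n - 1) ` (fv t - {0}) \<union> fv u"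

fun ofv :: "trm \<Rightarrow> nat set" where
  "ofv (Var n) = {n}"
| "ofv (Lam t) = {}"
| "ofv (App t u) = ofv t \<union> ofv u"
| "ofv (ES t u) = (\<lambda>n. n - 1) ` (ofv t - {0}) \<union> ofv u"

definition liftr :: "(nat \<Rightarrow> nat) \<Rightarrow> nat \<Rightarrow> nat" where
  "liftr f n = (case n of 0 \<Rightarrow> 0 | Suc m \<Rightarrow> Suc (f m))"

fun ren :: "(nat \<Rightarrow> nat) \<Rightarrow> trm \<Rightarrow> trm" where
  "ren f (Var n) = Var (f n)"
| "ren f (Lam t) = Lam (ren (liftr f) t)"
| "ren f (App t u) = App (ren f t) (ren f u)"
| "ren f (ES t u) = ES (ren (liftr f) t) (ren f u)"

text \<open>Substitution contexts S = <.>[x1\u1]...[xk\uk], given by the list [u1,...,uk].\<close>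

fun plugS :: "trm list \<Rightarrow> trm \<Rightarrow> trm" where
  "plugS [] t = t"
| "plugS (u # us) t = plugS us (ES t u)"

definition is_value :: "trm \<Rightarrow> bool" where
  "is_value t \<longleftrightarrow> (\<exists>b. t = Lam b)"

datatype wctx = Hole | CAppL wctx trm | CAppR trm wctx | CESArg trm wctx | CESBody wctx trm

fun plugW :: "wctx \<Rightarrow> trm \<Rightarrow> trm" where
  "plugW Hole t = t"
| "plugW (CAppL W u) t = App (plugW W t) u"
| "plugW (CAppR u W) t = App u (plugW W t)"
| "plugW (CESArg u W) t = ES u (plugW W t)"
| "plugW (CESBody W u) t = ES (plugW W t) u"

fun wdepth :: "wctx \<Rightarrow> nat" where
  "wdepth Hole = 0"
| "wdepth (CAppL W u) = wdepth W"
| "wdepth (CAppR u W) = wdepth W"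
| "wdepth (CESArg u W) = wdepth W"
| "wdepth (CESBody W u) = Suc (wdepth W)"

text \<open>Root rules.
  m:   S<\<lambda>x.t> u  \<mapsto>  S<t[x\u]>   (u is shifted past the binders of S)
  e:   W<<x>>[x\u]  \<mapsto>  W<<u>>[x\u]  (the hole variable refers to the outer x;
       u is shifted past the binders of W and the ES)
  gcv: t[x\S<v>]  \<mapsto>  S<t>  if x not free in t.\<close>

inductive root_step :: "trm \<Rightarrow> trm \<Rightarrow> bool" where
  rule_m: "root_step (App (plugS S (Lam t)) u)
                     (plugS S (ES t (ren (\<lambda>n. n + length S) u)))"
| rule_e: "root_step (ES (plugW W (Var (wdepth W))) u)
                     (ES (plugW W (ren (\<lambda>n. n + Suc (wdepth W)) u)) u)"
| rule_gcv: "is_value v \<Longrightarrow> 0 \<notin> fv t \<Longrightarrow>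
             root_step (ES t (plugS S v)) (plugS S (ren (\<lambda>n. n - 1 + length S) t))"

inductive wstep :: "trm \<Rightarrow> trm \<Rightarrow> bool" where
  w_root: "root_step t t' \<Longrightarrow> wstep t t'"
| w_appL: "wstep t t' \<Longrightarrow> wstep (App t u) (App t' u)"
| w_appR: "wstep u u' \<Longrightarrow> wstep (App t u) (App t u')"
| w_esArg: "wstep u u' \<Longrightarrow> wstep (ES t u) (ES t u')"
| w_esBody: "wstep t t' \<Longrightarrow> wstep (ES t u) (ES t' u)"

definition w_normal :: "trm \<Rightarrow> bool" where
  "w_normal t \<longleftrightarrow> \<not> (\<exists>t'. wstep t t')"

text \<open>Weak answers and inert terms (mutually inductive); in ES a u the
  bound variable x is index 0 of a.\<close>

inductive weak_answer :: "trm \<Rightarrow> bool" and inert :: "trm \<Rightarrow> bool" where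
  ans_val: "is_value v \<Longrightarrow> weak_answer v"
| ans_es_inert: "weak_answer a \<Longrightarrow> inert i \<Longrightarrow> 0 \<notin> ofv a \<Longrightarrow> weak_answer (ES a i)"
| ans_es_ans: "weak_answer a \<Longrightarrow> weak_answer a' \<Longrightarrow> 0 \<in> fv a - ofv a \<Longrightarrow> weak_answer (ES a a')"
| inert_var: "inert (Var x)"
| inert_app: "inert i \<Longrightarrow> weak_answer n \<or> inert n \<Longrightarrow> inert (App i n)"
| inert_es_inert: "inert i \<Longrightarrow> inert i' \<Longrightarrow> 0 \<notin> ofv i \<Longrightarrow> inert (ES i i')"
| inert_es_ans: "inert i \<Longrightarrow> weak_answer a \<Longrightarrow> 0 \<in> fv i - ofv i \<Longrightarrow> inert (ES i a)"

definition weak_normal_term :: "trm \<Rightarrow> bool" where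
  "weak_normal_term t \<longleftrightarrow> weak_answer t \<or> inert t"

end

theory Submission
  imports Defs
begin

text \<open>Normality is compositional.  An application a b is normal iff a and b are and a is
  not an answer S<\<lambda>x.c> (no m-redex); an explicit substitution a[x\b] is normal iff a and b
  are, x is not shallow free in a (a shallow occurrence is exactly one reachable by a weak
  context, giving an e-redex), and b is an answer only if x occurs in a (no gcv-redex).
  By induction on the term, the normal terms of answer shape are then exactly the weak
  answers and the remaining normal terms exactly the inert terms.\<close>

fun is_answer :: "trm \<Rightarrow> bool" where
  "is_answer (Lam _) = True"
| "is_answer (ES t _) = is_answer t"
| "is_answer _ = False"

lemma plugS_append_single: "plugS (S @ [u]) t = ES (plugS S t) u"
  by (induction S arbitrary: t) auto

lemma is_answer_plugS: "is_answer (plugS S t) = is_answer t"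
  by (induction S arbitrary: t) auto

lemma is_answer_iff_plugS_Lam: "is_answer t \<longleftrightarrow> (\<exists>S b. t = plugS S (Lam b))"
proof
  show "is_answer t \<Longrightarrow> \<exists>S b. t = plugS S (Lam b)"
  proof (induction t)
    case (Lam b)
    have "Lam b = plugS [] (Lam b)" by simp
    then show ?case by blast
  next
    case (ES t u)
    then obtain S b where "t = plugS S (Lam b)" by auto
    then have "ES t u = plugS (S @ [u]) (Lam b)" by (simp add: plugS_append_single)
    then show ?case by blast
  qed auto
qed (auto simp: is_answer_plugS)

lemma ofv_plugW_Var: "n \<in> ofv (plugW W (Var (n + wdepth W)))"
proof (induction W arbitrary: n)
  case (CESBody W u)
  have "Suc n \<in> ofv (plugW W (Var (Suc n + wdepth W)))" by (rule CESBody.IH)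
  then have "n \<in> (\<lambda>n. n - 1) ` (ofv (plugW W (Var (n + Suc (wdepth W)))) - {0})"
    by (intro rev_image_eqI[of "Suc n"]) auto
  then show ?case by simp
qed auto

lemma ofv_imp_plugW_Var: "n \<in> ofv t \<Longrightarrow> \<exists>W. t = plugW W (Var (n + wdepth W))"
proof (induction t arbitrary: n)
  case (Var x)
  then have "Var x = plugW Hole (Var (n + wdepth Hole))" by simp
  then show ?case by blast
next
  case (App a b)
  show ?case
  proof (cases "n \<in> ofv a")
    case True
    then obtain W where "a = plugW W (Var (n + wdepth W))" using App.IH by blast
    then have "App a b = plugW (CAppL W b) (Var (n + wdepth (CAppL W b)))" by simp
    then show ?thesis by blast
  next
    case False
    then have "n \<in> ofv b" using App.prems by simp
    then obtain W where "b = plugW W (Var (n + wdepth W))" using App.IH by blast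
    then have "App a b = plugW (CAppR a W) (Var (n + wdepth (CAppR a W)))" by simp
    then show ?thesis by blast
  qed
next
  case (ES a b)
  show ?case
  proof (cases "n \<in> ofv b")
    case True
    then obtain W where "b = plugW W (Var (n + wdepth W))" using ES.IH by blast
    then have "ES a b = plugW (CESArg a W) (Var (n + wdepth (CESArg a W)))" by simp
    then show ?thesis by blast
  next
    case False
    then obtain m where "m \<in> ofv a" "m \<noteq> 0" "n = m - 1" using ES.prems by auto
    then have "Suc n \<in> ofv a" by (cases m) auto
    then obtain W where "a = plugW W (Var (Suc n + wdepth W))" using ES.IH by blast
    then have "ES a b = plugW (CESBody W b) (Var (n + wdepth (CESBody W b)))" by simp
    then show ?thesis by blast
  qed
qed simp

lemma ofv_iff_plugW_Var: "n \<in> ofv t \<longleftrightarrow> (\<exists>W. t = plugW W (Var (n + wdepth W)))"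
  using ofv_imp_plugW_Var ofv_plugW_Var by blast

lemma root_step_App_iff: "(\<exists>t'. root_step (App a b) t') \<longleftrightarrow> is_answer a"
proof
  show "\<exists>t'. root_step (App a b) t' \<Longrightarrow> is_answer a"
    by (auto elim: root_step.cases simp: is_answer_plugS)
  show "is_answer a \<Longrightarrow> \<exists>t'. root_step (App a b) t'"
    by (auto simp: is_answer_iff_plugS_Lam intro: rule_m)
qed

lemma root_step_ES_iff:
  "(\<exists>t'. root_step (ES a b) t') \<longleftrightarrow> 0 \<in> ofv a \<or> (is_answer b \<and> 0 \<notin> fv a)"
proof
  assume "\<exists>t'. root_step (ES a b) t'"
  then obtain t' where "root_step (ES a b) t'" ..
  then show "0 \<in> ofv a \<or> (is_answer b \<and> 0 \<notin> fv a)"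
    by (cases rule: root_step.cases)
      (auto simp: is_answer_plugS is_value_def intro: ofv_plugW_Var[of 0, simplified])
next
  assume "0 \<in> ofv a \<or> (is_answer b \<and> 0 \<notin> fv a)"
  then show "\<exists>t'. root_step (ES a b) t'"
  proof
    assume "0 \<in> ofv a"
    then obtain W where "a = plugW W (Var (wdepth W))"
      using ofv_iff_plugW_Var[of 0 a] by auto
    then show ?thesis using rule_e by blast
  next
    assume "is_answer b \<and> 0 \<notin> fv a"
    then obtain S c where "b = plugS S (Lam c)" "0 \<notin> fv a"
      by (auto simp: is_answer_iff_plugS_Lam)
    then show ?thesis using rule_gcv[of "Lam c" a S] by (auto simp: is_value_def)
  qed
qed

lemma w_normal_Var: "w_normal (Var n)"
  by (auto simp: w_normal_def elim: wstep.cases root_step.cases)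

lemma w_normal_Lam: "w_normal (Lam b)"
  by (auto simp: w_normal_def elim: wstep.cases root_step.cases)

lemma w_normal_App_iff:
  "w_normal (App a b) \<longleftrightarrow> w_normal a \<and> w_normal b \<and> (\<nexists>t'. root_step (App a b) t')"
  unfolding w_normal_def by (blast elim: wstep.cases intro: wstep.intros)

lemma w_normal_ES_iff:
  "w_normal (ES a b) \<longleftrightarrow> w_normal a \<and> w_normal b \<and> (\<nexists>t'. root_step (ES a b) t')"
  unfolding w_normal_def by (blast elim: wstep.cases intro: wstep.intros)

lemma weak_answer_is_answer: "weak_answer t \<Longrightarrow> is_answer t"
  and inert_not_is_answer: "inert t \<Longrightarrow> \<not> is_answer t"
  by (induction rule: weak_answer_inert.inducts) (auto simp: is_value_def)

lemma inert_App_iff: "inert (App a b) \<longleftrightarrow> inert a \<and> (weak_answer b \<or> inert b)"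
  by (auto intro: inert_app elim: inert.cases)

lemma weak_answer_ES_iff:
  "weak_answer (ES a b) \<longleftrightarrow>
     weak_answer a \<and> (inert b \<and> 0 \<notin> ofv a \<or> weak_answer b \<and> 0 \<in> fv a - ofv a)"
  by (auto intro: ans_es_inert ans_es_ans elim: weak_answer.cases simp: is_value_def)

lemma inert_ES_iff:
  "inert (ES a b) \<longleftrightarrow>
     inert a \<and> (inert b \<and> 0 \<notin> ofv a \<or> weak_answer b \<and> 0 \<in> fv a - ofv a)"
  by (auto intro: inert_es_inert inert_es_ans elim: inert.cases)

lemma w_normal_iff_answer_or_inert:
  "w_normal t \<longleftrightarrow> (if is_answer t then weak_answer t else inert t)"
proof (induction t)
  case (Var x)
  show ?case by (simp add: w_normal_Var inert_var)
next
  case (Lam b)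
  show ?case by (simp add: w_normal_Lam ans_val is_value_def)
next
  case (App a b)
  then show ?case
    using weak_answer_is_answer inert_not_is_answer
    by (auto simp: w_normal_App_iff root_step_App_iff inert_App_iff)
next
  case (ES a b)
  then show ?case
    using weak_answer_is_answer inert_not_is_answer
    by (cases "is_answer b")
      (auto simp: w_normal_ES_iff root_step_ES_iff weak_answer_ES_iff inert_ES_iff)
qed

theorem proposition4p2:
  shows "w_normal t \<longleftrightarrow> weak_normal_term t"
  using w_normal_iff_answer_or_inert[of t] weak_answer_is_answer inert_not_is_answer
  unfolding weak_normal_term_def by (auto split: if_splits)

end
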